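(* Let $N\ge 3$, $p>1$, and let $r_1\le r_2\le\dots\le r_N$ be arbitrary points of $[0,1]$. Define $\tilde\sigma\in S_N$ by $$\tilde\sigma(i)=\begin{cases}2i-1 & \text{if } i\le (N+1)/2,\\ 2N-2i+2 & \text{if } i>(N+1)/2.\end{cases}$$ Then the Hamiltonian cycle $h[\tilde\sigma]=(r_{\tilde\sigma(1)},r_{\tilde\sigma(2)},\dots,r_{\tilde\sigma(N)},r_{\tilde\sigma(1)})$ is optimal: $E(h[\tilde\sigma])\le E(h)$ for every Hamiltonian cycle $h$ of $\mathcal K_N$. Equivalently, the minimal cost equals $|r_2-r_1|^p+|r_N-r_{N-1}|^p+\sum_{i=1}^{N-2}|r_{i+2}-r_i|^p$.
   Context: The points $r_1,\dots,r_N$ are the vertices of the complete graph $\mathcal K_N$. For $p\in\mathbb R$ the weight of the edge $\{r_i,r_j\}$ is $w_{ij}=|r_i-r_j|^p$, and the cost of a Hamiltonian cycle $h$ is $E(h)=\sum_{e\in h}w_e$. For a permutation $\sigma\in S_N$, $h[\sigma]$ denotes the Hamiltonian cycle with edges $\{r_{\sigma(i)},r_{\sigma(i+1)}\}$, $i=1,\dots,N$, where $\sigma(N+1):=\sigma(1)$. *)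

theory Defs
  imports Complex_Main "HOL-Combinatorics.Permutations"
begin

text \<open>Points are indexed 1..N as r 1, ..., r N. Edge weight |r i - r j| powr p.\<close>

definition edge_weight :: "(nat \<Rightarrow> real) \<Rightarrow> real \<Rightarrow> nat \<Rightarrow> nat \<Rightarrow> real" where
  "edge_weight r p i j = \<bar>r i - r j\<bar> powr p"

definition cycle_cost :: "(nat \<Rightarrow> real) \<Rightarrow> real \<Rightarrow> nat \<Rightarrow> (nat \<Rightarrow> nat) \<Rightarrow> real" where
  "cycle_cost r p N \<sigma> =
     (\<Sum>i=1..N. edge_weight r p (\<sigma> i) (\<sigma> (if i = N then 1 else i + 1)))"

definition sigma_tilde :: "nat \<Rightarrow> nat \<Rightarrow> nat" where
  "sigma_tilde N i =
     (if i < 1 \<or> i > N then i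
      else if 2 * i \<le> N + 1 then 2 * i - 1
      else 2 * N - 2 * i + 2)"

end

theory Submission
  imports Defs "HOL-Analysis.Convex"
begin

text \<open>
  Rotating a cycle does not change its cost, so we may assume that the largest point r N is
  visited last. Deleting it leaves a Hamiltonian cycle on r 1, ..., r (N - 1), and the cost drops
  by the detour w(a, N) + w(N, b) - w(a, b) through the two neighbours a, b of N. Since the weight
  is a convex increasing function of the distance, this detour is smallest when a and b are the
  points closest to r N, namely N - 1 and N - 2. The zigzag cost of the theorem grows by exactly
  that detour from N - 1 to N, so it is a lower bound by induction on N; and the zigzag cycle
  sigma_tilde (odd indices upwards, even indices downwards) attains it.
\<close>

lemma convex_on_increment_mono:
  fixes f :: "real \<Rightarrow> real"
  assumes f: "convex_on I f" and "x \<in> I" "y + h \<in> I" "x \<le> y" "h \<ge> 0"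
  shows "f (x + h) + f y \<le> f x + f (y + h)"
proof (cases "y - x + h = 0")
  case True
  then have "h = 0" "y = x" using assms by auto
  then show ?thesis by simp
next
  case False
  define t where "t = (y - x) / (y - x + h)"
  have t: "0 \<le> t" "t \<le> 1" using False assms by (auto simp: t_def field_simps)
  have "t * (y - x + h) = y - x" using False by (simp add: t_def)
  then have "x + h = (1 - t) *\<^sub>R (y + h) + t *\<^sub>R x" "y = (1 - t) *\<^sub>R x + t *\<^sub>R (y + h)"
    by (simp_all add: algebra_simps)
  then have "f (x + h) \<le> (1 - t) * f (y + h) + t * f x" "f y \<le> (1 - t) * f x + t * f (y + h)"
    using convex_onD[OF f t] assms by metis+
  then show ?thesis by (simp add: algebra_simps)
qed

lemma powr_convex_nonneg:
  fixes p :: real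
  assumes "p \<ge> 1"
  shows "convex_on {0..} (\<lambda>x. x powr p)"
proof (rule convex_on_linorderI)
  fix t x y :: real
  assume t: "0 < t" "t < 1" and xy: "x \<in> {0..}" "y \<in> {0..}" "x < y"
  show "((1 - t) *\<^sub>R x + t *\<^sub>R y) powr p \<le> (1 - t) * x powr p + t * y powr p"
  proof (cases "x = 0")
    case True
    have "t powr p \<le> t powr 1"
      using t assms by (intro powr_mono') auto
    then have "t powr p * y powr p \<le> t * y powr p"
      using t by (intro mult_right_mono) auto
    then show ?thesis using True t xy by (simp add: powr_mult)
  next
    case False
    then show ?thesis
      using convex_onD[OF powr_convex[OF assms]] t xy by simp
  qed
qed simp

lemma convex_mono_detour_le:
  fixes f :: "real \<Rightarrow> real"
  assumes conv: "convex_on {0..} f" and mono: "mono_on {0..} f"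
    and "u \<le> v" "u \<le> u'" "u' \<le> v'" "v \<le> v'" "v' \<le> x"
  shows "f (x - u') + f (x - v') - f (v' - u') \<le> f (x - u) + f (x - v) - f (v - u)"
proof -
  have "f (x - v') \<le> f (x - v)" "f (v - u) \<le> f (v' - u)"
    using assms by (auto intro!: mono_onD[OF mono])
  moreover have "f ((v' - u') + (u' - u)) + f (x - u') \<le> f (v' - u') + f ((x - u') + (u' - u))"
    using assms by (intro convex_on_increment_mono[OF conv]) auto
  ultimately show ?thesis by simp
qed

lemma edge_weight_commute: "edge_weight r p i j = edge_weight r p j i"
  unfolding edge_weight_def by (simp add: abs_minus_commute)

lemma edge_weight_detour_last_le:
  assumes "p \<ge> 1" and mono: "\<And>i j. 1 \<le> i \<Longrightarrow> i \<le> j \<Longrightarrow> j \<le> N \<Longrightarrow> r i \<le> r j"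
    and "a \<in> {1..N-1}" "b \<in> {1..N-1}" "a \<noteq> b"
  shows "edge_weight r p (N-1) N + edge_weight r p N (N-2) - edge_weight r p (N-1) (N-2)
     \<le> edge_weight r p a N + edge_weight r p N b - edge_weight r p a b"
proof -
  have powr: "convex_on {0..} (\<lambda>x. x powr p)" "mono_on {0..} (\<lambda>x. x powr p)"
    using \<open>p \<ge> 1\<close> by (auto simp: powr_convex_nonneg mono_on_def powr_mono2)
  have ordered: "edge_weight r p (N-1) N + edge_weight r p N (N-2) - edge_weight r p (N-1) (N-2)
     \<le> edge_weight r p a N + edge_weight r p N b - edge_weight r p a b"
    if ab: "1 \<le> a" "a < b" "b \<le> N - 1" for a b
  proof -
    have "r a \<le> r b" "r a \<le> r (N-2)" "r (N-2) \<le> r (N-1)" "r b \<le> r (N-1)" "r (N-1) \<le> r N"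
      using ab by (auto intro!: mono)
    with convex_mono_detour_le[OF powr, of "r a" "r b" "r (N-2)" "r (N-1)" "r N"]
    show ?thesis by (simp add: edge_weight_def abs_minus_commute abs_of_nonneg)
  qed
  show ?thesis
  proof (cases "a < b")
    case True
    then show ?thesis using ordered assms by auto
  next
    case False
    then show ?thesis using ordered[of b a] assms
      by (auto simp: edge_weight_commute[of r p N] edge_weight_commute[of r p b a])
  qed
qed

definition cycle_next :: "nat \<Rightarrow> nat \<Rightarrow> nat" where
  "cycle_next N i = (if i = N then 1 else i + 1)"

lemma cycle_cost_cycle_next:
  "cycle_cost r p N \<sigma> = (\<Sum>i=1..N. edge_weight r p (\<sigma> i) (\<sigma> (cycle_next N i)))"
  unfolding cycle_cost_def cycle_next_def by simp

lemma bij_betw_cycle_next: "N \<ge> 1 \<Longrightarrow> bij_betw (cycle_next N) {1..N} {1..N}"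
  by (rule bij_betw_byWitness[where f' = "\<lambda>i. if i = 1 then N else i - 1"])
    (auto simp: cycle_next_def)

lemma cycle_cost_rotate:
  assumes "N \<ge> 1"
  shows "cycle_cost r p N (\<sigma> \<circ> (cycle_next N ^^ k)) = cycle_cost r p N \<sigma>"
proof -
  have step: "cycle_cost r p N (\<rho> \<circ> cycle_next N) = cycle_cost r p N \<rho>" for \<rho>
    unfolding cycle_cost_cycle_next
    using sum.reindex_bij_betw[OF bij_betw_cycle_next[OF assms],
        of "\<lambda>i. edge_weight r p (\<rho> i) (\<rho> (cycle_next N i))"] by simp
  show ?thesis
    by (induction k) (simp, simp only: funpow_Suc_right o_assoc step)
qed

lemma funpow_cycle_next_last: "1 \<le> j \<Longrightarrow> j \<le> N \<Longrightarrow> (cycle_next N ^^ j) N = j"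
  by (induction j rule: nat_induct_at_least) (auto simp: cycle_next_def)

lemma cycle_rotation_fixing_last:
  assumes "N \<ge> 1" and \<sigma>: "bij_betw \<sigma> {1..N} {1..N}"
  obtains \<tau> where "bij_betw \<tau> {1..N} {1..N}" "\<tau> N = N"
    "cycle_cost r p N \<tau> = cycle_cost r p N \<sigma>"
proof -
  obtain j where j: "j \<in> {1..N}" "\<sigma> j = N"
    using \<sigma> \<open>N \<ge> 1\<close> by (metis atLeastAtMost_iff bij_betw_iff_bijections order_refl)
  define \<tau> where "\<tau> = \<sigma> \<circ> (cycle_next N ^^ j)"
  have "bij_betw (cycle_next N ^^ j) {1..N} {1..N}"
    using bij_betw_cycle_next[OF assms(1)] by (rule bij_betw_funpow)
  then have "bij_betw \<tau> {1..N} {1..N}"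
    unfolding \<tau>_def using \<sigma> by (rule bij_betw_trans)
  moreover have "\<tau> N = N"
    using j funpow_cycle_next_last[of j N] by (simp add: \<tau>_def)
  moreover have "cycle_cost r p N \<tau> = cycle_cost r p N \<sigma>"
    unfolding \<tau>_def using assms(1) by (rule cycle_cost_rotate)
  ultimately show ?thesis by (rule that)
qed

lemma cycle_cost_Suc_fixing_last:
  assumes "n \<ge> 1" "\<tau> (Suc n) = Suc n"
  shows "cycle_cost r p (Suc n) \<tau> = cycle_cost r p n \<tau>
    + edge_weight r p (\<tau> n) (Suc n) + edge_weight r p (Suc n) (\<tau> 1) - edge_weight r p (\<tau> n) (\<tau> 1)"
proof -
  define path where "path = (\<Sum>i=1..<n. edge_weight r p (\<tau> i) (\<tau> (i + 1)))"
  have "cycle_cost r p n \<tau> = path + edge_weight r p (\<tau> n) (\<tau> 1)"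
    unfolding cycle_cost_def path_def using assms(1)
    by (simp add: sum.last_plus)
  moreover have "cycle_cost r p (Suc n) \<tau> = path + edge_weight r p (\<tau> n) (Suc n) + edge_weight r p (Suc n) (\<tau> 1)"
    unfolding cycle_cost_def path_def using assms
    by (simp add: sum.last_plus)
  ultimately show ?thesis by simp
qed

definition zigzag_cost :: "(nat \<Rightarrow> real) \<Rightarrow> real \<Rightarrow> nat \<Rightarrow> real" where
  "zigzag_cost r p N = \<bar>r 2 - r 1\<bar> powr p + \<bar>r N - r (N - 1)\<bar> powr p
     + (\<Sum>i=1..N-2. \<bar>r (i + 2) - r i\<bar> powr p)"

lemma zigzag_cost_Suc:
  assumes "n \<ge> 2"
  shows "zigzag_cost r p (Suc n) = zigzag_cost r p n
    + edge_weight r p n (Suc n) + edge_weight r p (Suc n) (n - 1) - edge_weight r p n (n - 1)"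
proof -
  obtain k where "n = Suc (Suc k)" using assms by (metis add_2_eq_Suc le_Suc_ex)
  then show ?thesis
    unfolding zigzag_cost_def edge_weight_def
    by (simp add: abs_minus_commute numeral_2_eq_2)
qed

lemma zigzag_cost_le_cycle_cost:
  assumes "N \<ge> 2" "p \<ge> 1"
    and mono: "\<And>i j. 1 \<le> i \<Longrightarrow> i \<le> j \<Longrightarrow> j \<le> N \<Longrightarrow> r i \<le> r j"
    and "bij_betw \<sigma> {1..N} {1..N}"
  shows "zigzag_cost r p N \<le> cycle_cost r p N \<sigma>"
  using assms
proof (induction N arbitrary: \<sigma> rule: nat_induct_at_least)
  case base
  have "(2::nat) \<ge> 1" by simp
  then obtain \<tau> where \<tau>: "bij_betw \<tau> {1..2} {1..2}" "\<tau> 2 = 2"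
    "cycle_cost r p 2 \<tau> = cycle_cost r p 2 \<sigma>"
    using base.prems(3) by (rule cycle_rotation_fixing_last)
  have "\<tau> 1 \<in> {1..2}" "\<tau> 1 \<noteq> \<tau> 2"
    using bij_betwE[OF \<tau>(1)] inj_onD[OF bij_betw_imp_inj_on[OF \<tau>(1)], of 1 2] by auto
  then have "\<tau> 1 = 1" using \<tau>(2) by auto
  then have "cycle_cost r p 2 \<tau> = zigzag_cost r p 2"
    using \<tau>(2)
    by (simp add: cycle_cost_def zigzag_cost_def edge_weight_def abs_minus_commute numeral_2_eq_2)
  then show ?case using \<tau>(3) by simp
next
  case (Suc n)
  have "Suc n \<ge> 1" by simp
  then obtain \<tau> where \<tau>: "bij_betw \<tau> {1..Suc n} {1..Suc n}" "\<tau> (Suc n) = Suc n"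
    "cycle_cost r p (Suc n) \<tau> = cycle_cost r p (Suc n) \<sigma>"
    using Suc.prems(3) by (rule cycle_rotation_fixing_last)
  have "bij_betw \<tau> ({1..Suc n} - {Suc n}) ({1..Suc n} - {Suc n})"
    using \<tau> by (intro bij_betw_DiffI) auto
  moreover have "{1..Suc n} - {Suc n} = {1..n}" by auto
  ultimately have \<tau>_restrict: "bij_betw \<tau> {1..n} {1..n}" by simp
  have "\<tau> n \<in> {1..n}" "\<tau> 1 \<in> {1..n}" "\<tau> n \<noteq> \<tau> 1"
    using bij_betwE[OF \<tau>_restrict] inj_onD[OF bij_betw_imp_inj_on[OF \<tau>_restrict], of n 1] Suc.hyps
    by auto
  then have detour: "edge_weight r p n (Suc n) + edge_weight r p (Suc n) (n - 1) - edge_weight r p n (n - 1)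
      \<le> edge_weight r p (\<tau> n) (Suc n) + edge_weight r p (Suc n) (\<tau> 1) - edge_weight r p (\<tau> n) (\<tau> 1)"
    using edge_weight_detour_last_le[of p "Suc n" r "\<tau> n" "\<tau> 1"] Suc.prems by simp
  have "zigzag_cost r p n \<le> cycle_cost r p n \<tau>"
    using Suc.IH[OF Suc.prems(1) _ \<tau>_restrict] Suc.prems(2) by simp
  with detour have "zigzag_cost r p (Suc n) \<le> cycle_cost r p (Suc n) \<tau>"
    using Suc.hyps \<tau>(2) by (simp add: zigzag_cost_Suc cycle_cost_Suc_fixing_last)
  then show ?case using \<tau>(3) by simp
qed

lemma sum_atLeastAtMost_odd_even:
  fixes g :: "nat \<Rightarrow> 'a::comm_monoid_add"
  shows "(\<Sum>j=1..n. g j) = (\<Sum>i=1..(n + 1) div 2. g (2 * i - 1)) + (\<Sum>i=1..n div 2. g (2 * i))"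
proof (induction n)
  case (Suc n)
  show ?case
  proof (cases "even n")
    case True
    then obtain k where "n = 2 * k" by blast
    then show ?thesis using Suc.IH by (simp add: ac_simps)
  next
    case False
    then obtain k where "n = 2 * k + 1" using oddE by blast
    then show ?thesis using Suc.IH by (simp add: ac_simps)
  qed
qed simp

lemma sigma_tilde_lower_half: "1 \<le> i \<Longrightarrow> 2 * i \<le> N + 1 \<Longrightarrow> sigma_tilde N i = 2 * i - 1"
  by (simp add: sigma_tilde_def)

lemma sigma_tilde_upper_half: "N + 1 < 2 * i \<Longrightarrow> i \<le> N \<Longrightarrow> sigma_tilde N i = 2 * N - 2 * i + 2"
  by (simp add: sigma_tilde_def)

lemma sigma_tilde_turn:
  assumes "N \<ge> 2"
  shows "sigma_tilde N ((N + 1) div 2) = N \<and> sigma_tilde N ((N + 1) div 2 + 1) = N - 1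
    \<or> sigma_tilde N ((N + 1) div 2) = N - 1 \<and> sigma_tilde N ((N + 1) div 2 + 1) = N"
proof -
  define m where "m = (N + 1) div 2"
  have m: "1 \<le> m" "2 * m \<le> N + 1" "N + 1 < 2 * (m + 1)" "m + 1 \<le> N"
    using assms unfolding m_def by presburger+
  have "sigma_tilde N m = 2 * m - 1" "sigma_tilde N (m + 1) = 2 * N - 2 * (m + 1) + 2"
    using m by (intro sigma_tilde_lower_half sigma_tilde_upper_half; simp)+
  moreover have "2 * m - 1 = N \<and> 2 * N - 2 * (m + 1) + 2 = N - 1
      \<or> 2 * m - 1 = N - 1 \<and> 2 * N - 2 * (m + 1) + 2 = N"
    using m by arith
  ultimately show ?thesis unfolding m_def[symmetric] by simp
qed

lemma inj_on_sigma_tilde: "inj_on (sigma_tilde N) {1..N}"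
proof (rule inj_onI)
  fix i j
  assume i: "i \<in> {1..N}" and j: "j \<in> {1..N}" and eq: "sigma_tilde N i = sigma_tilde N j"
  have odd_iff: "odd (sigma_tilde N k) \<longleftrightarrow> 2 * k \<le> N + 1" if "k \<in> {1..N}" for k
    using that by (auto simp: sigma_tilde_def)
  have "2 * i \<le> N + 1 \<longleftrightarrow> 2 * j \<le> N + 1"
    using odd_iff[OF i] odd_iff[OF j] eq by simp
  then show "i = j"
    using i j eq by (auto simp: sigma_tilde_def split: if_splits)
qed

lemma sigma_tilde_permutes: "sigma_tilde N permutes {1..N}"
proof (rule bij_imp_permutes)
  have "sigma_tilde N ` {1..N} \<subseteq> {1..N}"
    by (auto simp: sigma_tilde_def)
  then show "bij_betw (sigma_tilde N) {1..N} {1..N}"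
    using inj_on_sigma_tilde endo_inj_surj[of "{1..N}" "sigma_tilde N"] by (auto simp: bij_betw_def)
qed (auto simp: sigma_tilde_def)

lemma cycle_cost_sigma_tilde:
  assumes "N \<ge> 3"
  shows "cycle_cost r p N (sigma_tilde N) = zigzag_cost r p N"
proof -
  define m where "m = (N + 1) div 2"
  have m: "2 \<le> m" "m < N" "2 * m \<le> N + 1" "N \<le> 2 * m" "m - 1 = (N - 1) div 2" "N - Suc m = (N - 2) div 2"
    using assms unfolding m_def by presburger+
  \<comment> \<open>The zigzag turns at position m: positions i < m carry the edges {2i-1, 2i+1}, positions
    i > m the edges {2(N-i), 2(N-i)+2}, position m the edge {N-1, N} and position N the edge {2, 1}.\<close>
  define T where "T i = edge_weight r p (sigma_tilde N i) (sigma_tilde N (if i = N then 1 else i + 1))" for i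
  define G where "G j = \<bar>r (j + 2) - r j\<bar> powr p" for j
  have "N - 2 + 1 = N - 1" using assms by simp
  have "cycle_cost r p N (sigma_tilde N) = sum T {1..<N} + T N"
    using assms by (simp add: cycle_cost_def T_def sum.last_plus)
  also have "sum T {1..<N} = sum T {1..<m} + T m + sum T {Suc m..<N}"
    using m sum.atLeastLessThan_concat[of 1 m N T] sum.atLeast_Suc_lessThan[of m N T]
    by (metis add.assoc le_add1 le_trans less_imp_le one_add_one)
  also have "sum T {1..<m} = (\<Sum>i=1..(N - 1) div 2. G (2 * i - 1))"
  proof (rule sum.cong)
    show "{1..<m} = {1..(N - 1) div 2}" using m by auto
    fix i assume "i \<in> {1..(N - 1) div 2}"
    then have i: "1 \<le> i" "2 * (i + 1) \<le> N + 1" by auto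
    then have "sigma_tilde N i = 2 * i - 1" "sigma_tilde N (i + 1) = 2 * (i + 1) - 1"
      by (intro sigma_tilde_lower_half; simp)+
    moreover have "2 * (i + 1) - 1 = 2 * i - 1 + 2" "i \<noteq> N" using i by auto
    ultimately show "T i = G (2 * i - 1)" by (simp add: T_def G_def edge_weight_def abs_minus_commute)
  qed
  also have "sum T {Suc m..<N} = (\<Sum>i=1..(N - 2) div 2. G (2 * i))"
  proof (rule sum.reindex_bij_witness[where i = "\<lambda>i. N - i" and j = "\<lambda>i. N - i"])
    fix i assume "i \<in> {Suc m..<N}"
    then have "sigma_tilde N i = 2 * N - 2 * i + 2" "sigma_tilde N (i + 1) = 2 * N - 2 * (i + 1) + 2"
      using m by (intro sigma_tilde_upper_half; simp)+
    moreover have "2 * N - 2 * i + 2 = 2 * (N - i) + 2" "2 * N - 2 * (i + 1) + 2 = 2 * (N - i)" "i \<noteq> N"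
      using \<open>i \<in> {Suc m..<N}\<close> by auto
    ultimately show "G (2 * (N - i)) = T i" by (simp add: T_def G_def edge_weight_def)
  qed (use m in auto)
  also have "T m = \<bar>r N - r (N - 1)\<bar> powr p"
    using sigma_tilde_turn[of N] assms m
    unfolding T_def edge_weight_def m_def[symmetric] by (auto simp: abs_minus_commute)
  also have "T N = \<bar>r 2 - r 1\<bar> powr p"
  proof -
    have "sigma_tilde N N = 2" "sigma_tilde N 1 = 1"
      using assms by (simp_all add: sigma_tilde_def)
    then show ?thesis by (simp add: T_def edge_weight_def)
  qed
  finally show ?thesis
    using sum_atLeastAtMost_odd_even[of G "N - 2"] \<open>N - 2 + 1 = N - 1\<close>
    by (simp add: zigzag_cost_def G_def)
qed

theorem proposition1:
  fixes N :: nat and p :: real and r :: "nat \<Rightarrow> real"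
  assumes "N \<ge> 3" and "p > 1"
    and "\<And>i. 1 \<le> i \<Longrightarrow> i \<le> N \<Longrightarrow> r i \<in> {0..1}"
    and "\<And>i j. 1 \<le> i \<Longrightarrow> i \<le> j \<Longrightarrow> j \<le> N \<Longrightarrow> r i \<le> r j"
  shows "sigma_tilde N permutes {1..N}
    \<and> (\<forall>\<sigma>. \<sigma> permutes {1..N} \<longrightarrow> cycle_cost r p N (sigma_tilde N) \<le> cycle_cost r p N \<sigma>)
    \<and> cycle_cost r p N (sigma_tilde N) =
        \<bar>r 2 - r 1\<bar> powr p + \<bar>r N - r (N - 1)\<bar> powr p
        + (\<Sum>i=1..N-2. \<bar>r (i + 2) - r i\<bar> powr p)"
proof (intro conjI allI impI)
  show "sigma_tilde N permutes {1..N}" by (rule sigma_tilde_permutes)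
  have zigzag: "cycle_cost r p N (sigma_tilde N) = zigzag_cost r p N"
    using assms(1) by (rule cycle_cost_sigma_tilde)
  then show "cycle_cost r p N (sigma_tilde N) =
      \<bar>r 2 - r 1\<bar> powr p + \<bar>r N - r (N - 1)\<bar> powr p + (\<Sum>i=1..N-2. \<bar>r (i + 2) - r i\<bar> powr p)"
    by (simp add: zigzag_cost_def)
  fix \<sigma> assume "\<sigma> permutes {1..N}"
  then have "zigzag_cost r p N \<le> cycle_cost r p N \<sigma>"
    using assms by (intro zigzag_cost_le_cycle_cost permutes_imp_bij) auto
  then show "cycle_cost r p N (sigma_tilde N) \<le> cycle_cost r p N \<sigma>"
    using zigzag by simp
qed

end
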